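(* Let $\mathbf{A}\in\mathbb{R}^{m\times n}$ have rows $\mathbf{a}_1^\mathsf{T},\dots,\mathbf{a}_m^\mathsf{T}$, let $\lambda>\max_l\|\mathbf{a}_l\|_\infty$, and consider $$\text{(P}_\lambda\text{)}\quad \min_{\boldsymbol{x}\in[-1,1]^n}\ \max_{l\in\{1,\dots,m\}}\mathbf{a}_l^\mathsf{T}\boldsymbol{x}-\lambda\|\boldsymbol{x}\|_1.$$ Then every local minimizer of (P$_\lambda$) belongs to $\{-1,1\}^n$. Conversely, every point of $\{-1,1\}^n$ is a local minimizer of (P$_\lambda$).
   Context: A local minimizer of (P$_\lambda$) is a point $\bar{\boldsymbol{x}}\in[-1,1]^n$ such that for some $\epsilon>0$ the objective at $\bar{\boldsymbol{x}}$ is no larger than at every $\boldsymbol{x}\in[-1,1]^n$ with $\|\boldsymbol{x}-\bar{\boldsymbol{x}}\|_2\le\epsilon$. *)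

theory Defs
  imports "HOL-Analysis.Analysis"
begin

definition box_set :: "(real ^ 'n) set" where
  "box_set = {x. \<forall>i. \<bar>x $ i\<bar> \<le> 1}"

definition sign_vecs :: "(real ^ 'n) set" where
  "sign_vecs = {x. \<forall>i. x $ i = 1 \<or> x $ i = -1}"

definition l1norm :: "real ^ 'n \<Rightarrow> real" where
  "l1norm x = (\<Sum>i\<in>UNIV. \<bar>x $ i\<bar>)"

definition linfnorm :: "real ^ 'n \<Rightarrow> real" where
  "linfnorm x = Max (range (\<lambda>i. \<bar>x $ i\<bar>))"

text \<open>Objective of (P_lambda); rows of A are a l, l ranging over finite nonempty type 'm.\<close>
definition P_obj :: "('m::finite \<Rightarrow> real ^ 'n) \<Rightarrow> real \<Rightarrow> real ^ 'n \<Rightarrow> real" where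
  "P_obj a lam x = Max (range (\<lambda>l. a l \<bullet> x)) - lam * l1norm x"

definition local_min_P :: "('m::finite \<Rightarrow> real ^ 'n) \<Rightarrow> real \<Rightarrow> real ^ 'n \<Rightarrow> bool" where
  "local_min_P a lam xb \<longleftrightarrow> xb \<in> box_set \<and>
     (\<exists>\<epsilon>>0. \<forall>x\<in>box_set. norm (x - xb) \<le> \<epsilon> \<longrightarrow> P_obj a lam xb \<le> P_obj a lam x)"

end

theory Submission
  imports Defs
begin

text \<open>The maximum of the linear forms is Lipschitz with respect to the l1 norm, with constant
  any c bounding all the row norms; the objective therefore trades a change of the maximum
  against a change of lam times the l1 norm. Near a sign vector every feasible step moves
  each coordinate towards 0, so the l1 norm drops by exactly the l1 length of the step and
  the objective cannot decrease. At a feasible point with a coordinate strictly inside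
  (-1, 1), pushing that coordinate outwards by t raises the l1 norm by t but the maximum by
  at most c t < lam t, so the objective strictly decreases.\<close>

lemma component_abs_le_linfnorm: "\<bar>v $ i\<bar> \<le> linfnorm v"
  unfolding linfnorm_def by (rule Max_ge) auto

lemma l1norm_nonneg: "0 \<le> l1norm x"
  unfolding l1norm_def by (simp add: sum_nonneg)

lemma abs_inner_le_linfnorm_l1norm: "\<bar>v \<bullet> d\<bar> \<le> linfnorm v * l1norm d"
proof -
  have "\<bar>v \<bullet> d\<bar> = \<bar>\<Sum>i\<in>UNIV. v $ i * d $ i\<bar>" by (simp add: inner_vec_def)
  also have "\<dots> \<le> (\<Sum>i\<in>UNIV. \<bar>v $ i\<bar> * \<bar>d $ i\<bar>)"
    by (rule order_trans[OF sum_abs]) (simp add: abs_mult)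
  also have "\<dots> \<le> (\<Sum>i\<in>UNIV. linfnorm v * \<bar>d $ i\<bar>)"
    by (rule sum_mono) (simp add: mult_right_mono component_abs_le_linfnorm)
  finally show ?thesis by (simp add: l1norm_def sum_distrib_left)
qed

lemma Max_inner_le_add_l1norm:
  fixes a :: "'m::finite \<Rightarrow> real ^ 'n"
  assumes "\<forall>l. linfnorm (a l) \<le> c"
  shows "Max (range (\<lambda>l. a l \<bullet> x)) \<le> Max (range (\<lambda>l. a l \<bullet> y)) + c * l1norm (x - y)"
proof -
  have "Max (range (\<lambda>l. a l \<bullet> x)) \<in> range (\<lambda>l. a l \<bullet> x)"
    by (rule Max_in) auto
  then obtain l where l: "Max (range (\<lambda>l. a l \<bullet> x)) = a l \<bullet> x"
    unfolding image_iff by blast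
  have "a l \<bullet> x = a l \<bullet> y + a l \<bullet> (x - y)" by (simp add: inner_diff_right)
  also have "\<dots> \<le> Max (range (\<lambda>l. a l \<bullet> y)) + linfnorm (a l) * l1norm (x - y)"
    using abs_inner_le_linfnorm_l1norm[of "a l" "x - y"] by (intro add_mono) (auto intro: Max_ge)
  also have "\<dots> \<le> Max (range (\<lambda>l. a l \<bullet> y)) + c * l1norm (x - y)"
    using assms l1norm_nonneg by (intro add_left_mono mult_right_mono) auto
  finally show ?thesis using l by simp
qed

lemma l1norm_diff_sign_vec:
  assumes "x \<in> sign_vecs" "y \<in> box_set" "norm (y - x) \<le> 1"
  shows "l1norm (x - y) = l1norm x - l1norm y"
proof -
  have "\<bar>x $ j - y $ j\<bar> = \<bar>x $ j\<bar> - \<bar>y $ j\<bar>" for j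
  proof -
    have "x $ j = 1 \<or> x $ j = -1" "\<bar>y $ j\<bar> \<le> 1"
      using assms(1,2) unfolding sign_vecs_def box_set_def by auto
    moreover have "\<bar>y $ j - x $ j\<bar> \<le> 1"
      using component_le_norm_cart[of "y - x" j] assms(3) by simp
    ultimately show ?thesis by auto
  qed
  then show ?thesis by (simp add: l1norm_def sum_subtractf)
qed

lemma sign_vec_local_min_P:
  fixes a :: "'m::finite \<Rightarrow> real ^ 'n"
  assumes "\<forall>l. linfnorm (a l) \<le> lam" "x \<in> sign_vecs"
  shows "local_min_P a lam x"
proof -
  have "\<bar>x $ j\<bar> \<le> 1" for j
    using assms(2) unfolding sign_vecs_def by (cases "x $ j = 1") auto
  then have "x \<in> box_set" unfolding box_set_def by simp
  moreover have "P_obj a lam x \<le> P_obj a lam y" if "y \<in> box_set" "norm (y - x) \<le> 1" for y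
    using Max_inner_le_add_l1norm[OF assms(1), of x y] l1norm_diff_sign_vec[OF assms(2) that]
    by (simp add: P_obj_def algebra_simps)
  ultimately show ?thesis unfolding local_min_P_def by (auto intro!: exI[of _ 1])
qed

lemma box_outward_step:
  fixes x :: "real ^ 'n"
  assumes "x \<in> box_set" "\<bar>x $ i\<bar> < 1" "0 < e"
  obtains y t where "y \<in> box_set" "norm (y - x) \<le> e" "0 < t"
    "l1norm (y - x) = t" "l1norm y = l1norm x + t"
proof -
  define t where "t = min e (1 - \<bar>x $ i\<bar>)"
  define s :: real where "s = (if 0 \<le> x $ i then 1 else -1)"
  define y where "y = x + (t * s) *\<^sub>R axis i 1"
  have t: "0 < t" using assms(2,3) by (simp add: t_def)
  have abs_y: "\<bar>y $ j\<bar> = \<bar>x $ j\<bar> + (if j = i then t else 0)" for j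
    using t by (auto simp: y_def s_def axis_def)
  have "y \<in> box_set"
    using assms(1) abs_y by (auto simp: box_set_def t_def)
  moreover have diff: "l1norm (y - x) = t"
    using t by (simp add: l1norm_def y_def axis_def s_def if_distrib[of abs] cong: if_cong flip: sum_distrib_left)
  moreover have "norm (y - x) \<le> e"
    using norm_le_l1_cart[of "y - x"] diff by (simp add: l1norm_def t_def)
  moreover have "l1norm y = l1norm x + t"
    unfolding l1norm_def abs_y by (simp add: sum.distrib)
  ultimately show ?thesis using t that by blast
qed

lemma local_min_P_sign_vec:
  fixes a :: "'m::finite \<Rightarrow> real ^ 'n"
  assumes "\<forall>l. linfnorm (a l) \<le> c" "c < lam" "local_min_P a lam x"
  shows "x \<in> sign_vecs"
proof (rule ccontr)
  assume "x \<notin> sign_vecs"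
  obtain e where box: "x \<in> box_set" and "0 < e"
    and min: "\<forall>y\<in>box_set. norm (y - x) \<le> e \<longrightarrow> P_obj a lam x \<le> P_obj a lam y"
    using assms(3) unfolding local_min_P_def by auto
  obtain i where "x $ i \<noteq> 1" "x $ i \<noteq> -1"
    using \<open>x \<notin> sign_vecs\<close> unfolding sign_vecs_def by auto
  moreover have "\<bar>x $ i\<bar> \<le> 1" using box unfolding box_set_def by auto
  ultimately have "\<bar>x $ i\<bar> < 1" by auto
  then obtain y t where y: "y \<in> box_set" "norm (y - x) \<le> e" and "0 < t"
    and l1: "l1norm (y - x) = t" "l1norm y = l1norm x + t"
    using box_outward_step[OF box _ \<open>0 < e\<close>] by blast
  have "c * t < lam * t" using \<open>0 < t\<close> assms(2) by simp
  moreover have "Max (range (\<lambda>l. a l \<bullet> y)) \<le> Max (range (\<lambda>l. a l \<bullet> x)) + c * t"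
    using Max_inner_le_add_l1norm[OF assms(1), of y x] l1 by simp
  ultimately have "P_obj a lam y < P_obj a lam x"
    unfolding P_obj_def l1(2) distrib_left by linarith
  with min y show False by fastforce
qed

theorem theorem4:
  fixes a :: "'m::finite \<Rightarrow> real ^ 'n" and lam :: real
  assumes "\<forall>l. lam > linfnorm (a l)"
  shows "{x. local_min_P a lam x} = sign_vecs"
proof -
  define c where "c = Max (range (\<lambda>l. linfnorm (a l)))"
  have c_bound: "\<forall>l. linfnorm (a l) \<le> c"
    unfolding c_def by (auto intro: Max_ge)
  have "c \<in> range (\<lambda>l. linfnorm (a l))"
    unfolding c_def by (rule Max_in) auto
  then have "c < lam" using assms by auto
  show ?thesis
    using local_min_P_sign_vec[OF c_bound \<open>c < lam\<close>] sign_vec_local_min_P[of a lam] assms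
    by (auto intro: less_imp_le)
qed

end
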